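(* Let $\overrightarrow{W}$ be a Morse sequence on a simplicial complex $K$. Then for every $p$, $\partial_p\circ\widetilde{\curlywedge}_p=\widetilde{\curlywedge}_{p-1}\circ\widehat{\partial}_p$ and $\delta_p\circ\widetilde{\curlyvee}_p=\widetilde{\curlyvee}_{p+1}\circ\widehat{\delta}_p$ as maps on $\widehat W[p]$.
   Context: A simplicial complex $K$ is a finite collection of non-empty finite sets closed under taking non-empty subsets; $\dim\sigma=|\sigma|-1$, $K^{(p)}$ the set of $p$-simplices. A pair $(\sigma,\tau)$ with $\sigma\subsetneq\tau$ is a free pair for $K$ if $\tau$ is the only simplex other than $\sigma$ containing $\sigma$; $K$ is then an elementary expansion of $K\setminus\{\sigma,\tau\}$. If $\nu$ is a facet (maximal simplex) of $K$, $K$ is an elementary filling of $K\setminus\{\nu\}$. A Morse sequence on $K$ is a sequence $\langle\emptyset=K_0,\dots,K_k=K\rangle$ with each $K_i$ an elementary expansion or filling of $K_{i-1}$; simplices added by fillings are critical; for an expansion $K_i=K_{i-1}\cup\{\sigma,\tau\}$, $\sigma\subset\tau$, $\sigma$ is lower regular and $\tau$ upper regular. $\widehat W$ is the set of critical simplices. $K[p]$ is the $\mathbb{Z}_2$-vector space of subsets of $K^{(p)}$ (sum = symmetric difference, $0=\emptyset$), $\widehat W[p]=\{c\in K[p]:c\subseteq\widehat W\}$. For $\sigma\in K^{(p)}$, $\partial(\sigma)=\{\tau\in K^{(p-1)}:\tau\subset\sigma\}$, $\delta(\sigma)=\{\tau\in K^{(p+1)}:\sigma\subset\tau\}$, with linear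 extensions $\partial_p:K[p]\to K[p-1]$, $\delta_p:K[p]\to K[p+1]$. The reference map $\curlywedge$ is the unique map assigning to each $p$-simplex an element of $\widehat W[p]$, extended linearly, with $\curlywedge(\nu)=\{\nu\}$ for critical $\nu$ and $\curlywedge(\tau)=0=\curlywedge(\partial(\tau))$ for upper regular $\tau$; the coreference map $\curlyvee$ is the unique such map with $\curlyvee(\nu)=\{\nu\}$ for critical $\nu$ and $\curlyvee(\sigma)=0=\curlyvee(\delta(\sigma))$ for lower regular $\sigma$. $\widehat\partial_p:\widehat W[p]\to\widehat W[p-1]$, $\widehat\partial_p(c)=\curlywedge(\partial_p(c))$, and $\widehat\delta_p:\widehat W[p]\to\widehat W[p+1]$, $\widehat\delta_p(c)=\curlyvee(\delta_p(c))$. The extension map $\widetilde\curlywedge_p:\widehat W[p]\to K[p]$ and coextension map $\widetilde\curlyvee_p:\widehat W[p]\to K[p]$ are the linear maps with $\widetilde\curlywedge(\kappa)=\{\nu\in K:\kappa\in\curlyvee(\nu)\}$ and $\widetilde\curlyvee(\kappa)=\{\nu\in K:\kappa\in\curlywedge(\nu)\}$ for critical $p$-simplices $\kappa$. *)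

theory Defs
  imports Main
begin

definition simplicial_complex :: "'v set set \<Rightarrow> bool" where
  "simplicial_complex K \<longleftrightarrow> finite K \<and>
     (\<forall>\<sigma>\<in>K. finite \<sigma> \<and> \<sigma> \<noteq> {}) \<and>
     (\<forall>\<sigma>\<in>K. \<forall>\<rho>. \<rho> \<subseteq> \<sigma> \<and> \<rho> \<noteq> {} \<longrightarrow> \<rho> \<in> K)"

definition simplices_of_dim :: "'v set set \<Rightarrow> nat \<Rightarrow> 'v set set" where
  "simplices_of_dim K p = {\<sigma>\<in>K. card \<sigma> = p + 1}"

definition free_pair :: "'v set set \<Rightarrow> 'v set \<Rightarrow> 'v set \<Rightarrow> bool" where
  "free_pair K \<sigma> \<tau> \<longleftrightarrow> \<sigma> \<subset> \<tau> \<and> \<sigma> \<in> K \<and> \<tau> \<in> K \<and>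
     (\<forall>\<rho>\<in>K. \<sigma> \<subseteq> \<rho> \<and> \<rho> \<noteq> \<sigma> \<longrightarrow> \<rho> = \<tau>)"

definition elementary_expansion :: "'v set set \<Rightarrow> 'v set set \<Rightarrow> bool" where
  "elementary_expansion K L \<longleftrightarrow>
     (\<exists>\<sigma> \<tau>. free_pair K \<sigma> \<tau> \<and> L = K - {\<sigma>, \<tau>})"

definition facet :: "'v set set \<Rightarrow> 'v set \<Rightarrow> bool" where
  "facet K \<nu> \<longleftrightarrow> \<nu> \<in> K \<and> (\<forall>\<rho>\<in>K. \<nu> \<subseteq> \<rho> \<longrightarrow> \<rho> = \<nu>)"

definition elementary_filling :: "'v set set \<Rightarrow> 'v set set \<Rightarrow> bool" where
  "elementary_filling K L \<longleftrightarrow> (\<exists>\<nu>. facet K \<nu> \<and> L = K - {\<nu>})"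

definition morse_sequence :: "'v set set list \<Rightarrow> 'v set set \<Rightarrow> bool" where
  "morse_sequence Ks K \<longleftrightarrow> Ks \<noteq> [] \<and> Ks ! 0 = {} \<and> last Ks = K \<and>
     (\<forall>i < length Ks. simplicial_complex (Ks ! i)) \<and>
     (\<forall>i. i + 1 < length Ks \<longrightarrow>
        elementary_expansion (Ks ! (i+1)) (Ks ! i) \<or> elementary_filling (Ks ! (i+1)) (Ks ! i))"

definition critical :: "'v set set list \<Rightarrow> 'v set set" where
  "critical Ks = {\<nu>. \<exists>i. i + 1 < length Ks \<and> Ks ! (i+1) - Ks ! i = {\<nu>}}"

definition lower_regular :: "'v set set list \<Rightarrow> 'v set set" where
  "lower_regular Ks = {\<sigma>. \<exists>i \<tau>. i + 1 < length Ks \<and> \<sigma> \<subset> \<tau> \<and> Ks ! (i+1) - Ks ! i = {\<sigma>, \<tau>}}"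

definition upper_regular :: "'v set set list \<Rightarrow> 'v set set" where
  "upper_regular Ks = {\<tau>. \<exists>i \<sigma>. i + 1 < length Ks \<and> \<sigma> \<subset> \<tau> \<and> Ks ! (i+1) - Ks ! i = {\<sigma>, \<tau>}}"

text \<open>Z2-linear extension: sum (symmetric difference) of F a over a \<in> A.\<close>
definition zsum :: "('a \<Rightarrow> 'b set) \<Rightarrow> 'a set \<Rightarrow> 'b set" where
  "zsum F A = {x. odd (card {a\<in>A. x \<in> F a})}"

definition bd :: "'v set set \<Rightarrow> 'v set \<Rightarrow> 'v set set" where
  "bd K \<sigma> = {\<tau>\<in>K. \<tau> \<subset> \<sigma> \<and> card \<tau> + 1 = card \<sigma>}"

definition cobd :: "'v set set \<Rightarrow> 'v set \<Rightarrow> 'v set set" where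
  "cobd K \<sigma> = {\<tau>\<in>K. \<sigma> \<subset> \<tau> \<and> card \<tau> = card \<sigma> + 1}"

definition bd_chain :: "'v set set \<Rightarrow> 'v set set \<Rightarrow> 'v set set" where
  "bd_chain K c = zsum (bd K) c"

definition cobd_chain :: "'v set set \<Rightarrow> 'v set set \<Rightarrow> 'v set set" where
  "cobd_chain K c = zsum (cobd K) c"

definition is_reference :: "'v set set \<Rightarrow> 'v set set list \<Rightarrow> ('v set \<Rightarrow> 'v set set) \<Rightarrow> bool" where
  "is_reference K Ks f \<longleftrightarrow>
     (\<forall>\<sigma>. \<sigma> \<notin> K \<longrightarrow> f \<sigma> = {}) \<and>
     (\<forall>\<sigma>\<in>K. f \<sigma> \<subseteq> critical Ks \<inter> simplices_of_dim K (card \<sigma> - 1)) \<and>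
     (\<forall>\<nu>\<in>critical Ks. f \<nu> = {\<nu>}) \<and>
     (\<forall>\<tau>\<in>upper_regular Ks. f \<tau> = {} \<and> zsum f (bd K \<tau>) = {})"

definition is_coreference :: "'v set set \<Rightarrow> 'v set set list \<Rightarrow> ('v set \<Rightarrow> 'v set set) \<Rightarrow> bool" where
  "is_coreference K Ks f \<longleftrightarrow>
     (\<forall>\<sigma>. \<sigma> \<notin> K \<longrightarrow> f \<sigma> = {}) \<and>
     (\<forall>\<sigma>\<in>K. f \<sigma> \<subseteq> critical Ks \<inter> simplices_of_dim K (card \<sigma> - 1)) \<and>
     (\<forall>\<nu>\<in>critical Ks. f \<nu> = {\<nu>}) \<and>
     (\<forall>\<sigma>\<in>lower_regular Ks. f \<sigma> = {} \<and> zsum f (cobd K \<sigma>) = {})"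

definition reference :: "'v set set \<Rightarrow> 'v set set list \<Rightarrow> 'v set \<Rightarrow> 'v set set" where
  "reference K Ks = (THE f. is_reference K Ks f)"

definition coreference :: "'v set set \<Rightarrow> 'v set set list \<Rightarrow> 'v set \<Rightarrow> 'v set set" where
  "coreference K Ks = (THE f. is_coreference K Ks f)"

definition hat_bd :: "'v set set \<Rightarrow> 'v set set list \<Rightarrow> 'v set set \<Rightarrow> 'v set set" where
  "hat_bd K Ks c = zsum (reference K Ks) (bd_chain K c)"

definition hat_cobd :: "'v set set \<Rightarrow> 'v set set list \<Rightarrow> 'v set set \<Rightarrow> 'v set set" where
  "hat_cobd K Ks c = zsum (coreference K Ks) (cobd_chain K c)"

definition extension :: "'v set set \<Rightarrow> 'v set set list \<Rightarrow> 'v set set \<Rightarrow> 'v set set" where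
  "extension K Ks c = zsum (\<lambda>\<kappa>. {\<nu>\<in>K. \<kappa> \<in> coreference K Ks \<nu>}) c"

definition coextension :: "'v set set \<Rightarrow> 'v set set list \<Rightarrow> 'v set set \<Rightarrow> 'v set set" where
  "coextension K Ks c = zsum (\<lambda>\<kappa>. {\<nu>\<in>K. \<kappa> \<in> reference K Ks \<nu>}) c"

definition critical_chains :: "'v set set \<Rightarrow> 'v set set list \<Rightarrow> nat \<Rightarrow> 'v set set set" where
  "critical_chains K Ks p = {c. c \<subseteq> critical Ks \<inter> simplices_of_dim K p}"

end

theory Submission
  imports Defs
begin

text \<open>The simplices of a Morse sequence form an acyclic matching of the \<open>\<int>\<^sub>2\<close>-chain complex
  of \<open>K\<close>: each lower regular \<open>\<sigma>\<close> is paired with the upper regular \<open>\<tau>\<close> added with it, every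
  other face of \<open>\<tau>\<close> is added before, and every other coface of \<open>\<sigma>\<close> after that step.
  For such a matching the reference map is computed by recursion along the sequence, and a chain
  that has, like its boundary, no lower regular simplex is determined by its critical part, since
  the last added upper regular simplex of a nonzero difference would leave its partner in the
  boundary. The extension of a critical chain \<open>c\<close> is such a chain; so is its boundary, whose own
  boundary vanishes. Hence that boundary is the extension of its critical part, which is the
  reference of \<open>\<partial>c\<close>. The coboundary identity is the same argument for the dual matching,
  obtained by reversing the order of the sequence.\<close>

section \<open>Chains over \<open>\<int>\<^sub>2\<close>\<close>

lemma mem_zsum_iff: "x \<in> zsum F A \<longleftrightarrow> odd (card {a\<in>A. x \<in> F a})"
  by (simp add: zsum_def)

lemma zsum_subset_UN: "zsum F A \<subseteq> \<Union>(F ` A)"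
  unfolding zsum_def by (auto dest!: odd_pos simp: card_gt_0_iff)

lemma zsum_eq_empty: "(\<And>a. a \<in> A \<Longrightarrow> F a = {}) \<Longrightarrow> zsum F A = {}"
  using zsum_subset_UN[of F A] by auto

lemma zsum_cong: "(\<And>a. a \<in> A \<Longrightarrow> F a = G a) \<Longrightarrow> zsum F A = zsum G A"
  unfolding zsum_def by (metis (mono_tags, lifting) Collect_cong)

lemma zsum_singletons:
  assumes "\<And>a. a \<in> A \<Longrightarrow> F a = {a}"
  shows "zsum F A = A"
proof -
  have "{a\<in>A. x \<in> F a} = (if x \<in> A then {x} else {})" for x
    using assms by auto
  then show ?thesis
    unfolding zsum_def by auto
qed

lemma zsum_singleton [simp]: "zsum F {a} = F a"
proof -
  have "{b\<in>{a}. x \<in> F b} = (if x \<in> F a then {a} else {})" for x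
    by auto
  then show ?thesis
    unfolding zsum_def by auto
qed

lemma zsum_sym_diff:
  assumes "finite A" "finite B"
  shows "zsum F (sym_diff A B) = sym_diff (zsum F A) (zsum F B)"
proof -
  have "odd (card {a\<in>sym_diff A B. x \<in> F a}) \<longleftrightarrow>
      odd (card {a\<in>A. x \<in> F a}) \<noteq> odd (card {a\<in>B. x \<in> F a})" for x
  proof -
    let ?P = "\<lambda>S. {a\<in>S. x \<in> F a}"
    have "card (?P (sym_diff A B)) = card (?P (A - B)) + card (?P (B - A))"
      "card (?P A) = card (?P (A - B)) + card (?P (A \<inter> B))"
      "card (?P B) = card (?P (B - A)) + card (?P (A \<inter> B))"
      by (subst card_Un_disjoint[symmetric]; use assms in \<open>auto intro: arg_cong[where f = card]\<close>)+
    then show ?thesis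
      by auto
  qed
  then show ?thesis
    unfolding zsum_def by auto
qed

lemma zsum_Un_disjoint:
  assumes "finite A" "finite B" "A \<inter> B = {}"
  shows "zsum F (A \<union> B) = sym_diff (zsum F A) (zsum F B)"
  using zsum_sym_diff[OF assms(1,2)] assms(3) by (simp add: Diff_triv Int_commute)

lemma zsum_remove:
  assumes "finite A" "a \<in> A"
  shows "zsum F A = sym_diff (F a) (zsum F (A - {a}))"
  using zsum_Un_disjoint[of "{a}" "A - {a}" F] assms by (simp add: insert_absorb)

lemma zsum_eq_emptyD:
  assumes "finite A" "a \<in> A" "zsum F A = {}"
  shows "F a = zsum F (A - {a})"
  using zsum_remove[OF assms(1,2), of F] assms(3) by auto

lemma zsum_zsum:
  assumes "finite A" "\<And>a. a \<in> A \<Longrightarrow> finite (F a)"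
  shows "zsum G (zsum F A) = zsum (\<lambda>a. zsum G (F a)) A"
proof (rule set_eqI)
  fix x
  define V where "V = {y\<in>\<Union>(F ` A). x \<in> G y}"
  define mult where "mult y = card {a\<in>A. y \<in> F a}" for y
  have V: "finite V"
    using assms by (simp add: V_def)
  have "{y\<in>zsum F A. x \<in> G y} = {y\<in>V. odd (mult y)}"
    using zsum_subset_UN[of F A] by (auto simp: V_def mult_def zsum_def)
  then have "x \<in> zsum G (zsum F A) \<longleftrightarrow> odd (\<Sum>y\<in>V. mult y)"
    by (simp add: mem_zsum_iff even_sum_iff[OF V])
  also have "(\<Sum>y\<in>V. mult y) = (\<Sum>y\<in>V. \<Sum>a\<in>A. of_bool (y \<in> F a))"
    using assms(1) by (simp add: mult_def Int_def)
  also have "\<dots> = (\<Sum>a\<in>A. card (V \<inter> {y. y \<in> F a}))"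
    using V by (subst sum.swap) simp
  also have "\<dots> = (\<Sum>a\<in>A. card {y\<in>F a. x \<in> G y})"
    by (intro sum.cong arg_cong[where f = card]) (auto simp: V_def)
  finally show "x \<in> zsum G (zsum F A) \<longleftrightarrow> x \<in> zsum (\<lambda>a. zsum G (F a)) A"
    by (simp add: mem_zsum_iff even_sum_iff[OF assms(1)])
qed

lemma zsum_zsum_eq_empty:
  assumes "finite A" "\<And>a. a \<in> A \<Longrightarrow> finite (F a)"
    and "\<And>\<nu> \<rho>. \<nu> \<in> A \<Longrightarrow> even (card {\<tau>\<in>F \<nu>. \<rho> \<in> F \<tau>})"
  shows "zsum F (zsum F A) = {}"
proof -
  have "zsum F (F \<nu>) = {}" if "\<nu> \<in> A" for \<nu>
    using assms(3)[OF that] by (simp add: zsum_def)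
  then show ?thesis
    by (simp add: zsum_zsum[OF assms(1,2)] zsum_eq_empty)
qed

section \<open>The boundary of a boundary\<close>

lemma simplicial_complex_finite: "simplicial_complex K \<Longrightarrow> finite K"
  unfolding simplicial_complex_def by blast

lemma simplicial_complexD:
  assumes "simplicial_complex K" "\<sigma> \<in> K"
  shows "finite \<sigma>" "\<sigma> \<noteq> {}" "\<And>\<rho>. \<rho> \<subseteq> \<sigma> \<Longrightarrow> \<rho> \<noteq> {} \<Longrightarrow> \<rho> \<in> K"
  using assms unfolding simplicial_complex_def by blast+

lemma faces_between_eq:
  assumes K: "simplicial_complex K" and "\<nu> \<in> K" "\<rho> \<in> K" "\<rho> \<subseteq> \<nu>" "card \<nu> = card \<rho> + 2"
  shows "{\<tau>\<in>bd K \<nu>. \<rho> \<in> bd K \<tau>} = (\<lambda>w. insert w \<rho>) ` (\<nu> - \<rho>)"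
proof -
  have fin: "finite \<nu>" "finite \<rho>"
    using simplicial_complexD(1)[OF K] assms(2,3) by auto
  have "\<tau> \<in> bd K \<nu> \<and> \<rho> \<in> bd K \<tau> \<longleftrightarrow> (\<exists>w\<in>\<nu> - \<rho>. \<tau> = insert w \<rho>)" for \<tau>
  proof
    assume "\<tau> \<in> bd K \<nu> \<and> \<rho> \<in> bd K \<tau>"
    then have "\<rho> \<subset> \<tau>" "\<tau> \<subset> \<nu>" "card \<tau> = card \<rho> + 1"
      by (auto simp: bd_def)
    moreover from this have "card (\<tau> - \<rho>) = 1"
      using fin by (simp add: card_Diff_subset)
    then obtain w where "\<tau> - \<rho> = {w}"
      by (rule card_1_singletonE)
    ultimately show "\<exists>w\<in>\<nu> - \<rho>. \<tau> = insert w \<rho>"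
      by blast
  next
    assume "\<exists>w\<in>\<nu> - \<rho>. \<tau> = insert w \<rho>"
    then obtain w where w: "w \<in> \<nu>" "w \<notin> \<rho>" and \<tau>: "\<tau> = insert w \<rho>"
      by blast
    then have "\<tau> \<subseteq> \<nu>" "card \<tau> = card \<rho> + 1"
      using assms(4) fin by auto
    moreover from this have "\<tau> \<in> K"
      using simplicial_complexD(3)[OF K assms(2)] \<tau> by blast
    ultimately show "\<tau> \<in> bd K \<nu> \<and> \<rho> \<in> bd K \<tau>"
      using assms(3,5) w \<tau> by (auto simp: bd_def)
  qed
  then show ?thesis
    by blast
qed

lemma even_card_faces_between:
  assumes K: "simplicial_complex K" and \<nu>: "\<nu> \<in> K"
  shows "even (card {\<tau>\<in>bd K \<nu>. \<rho> \<in> bd K \<tau>})"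
proof (cases "{\<tau>\<in>bd K \<nu>. \<rho> \<in> bd K \<tau>} = {}")
  case False
  then obtain \<tau> where "\<rho> \<in> K" "\<rho> \<subset> \<tau>" "\<tau> \<subset> \<nu>" "card \<rho> + 1 = card \<tau>" "card \<tau> + 1 = card \<nu>"
    by (auto simp: bd_def)
  then have "\<rho> \<subseteq> \<nu>" "card \<nu> = card \<rho> + 2"
    by auto
  moreover have "finite \<nu>"
    using simplicial_complexD(1)[OF K \<nu>] .
  ultimately have "card (\<nu> - \<rho>) = 2" "{\<tau>\<in>bd K \<nu>. \<rho> \<in> bd K \<tau>} = (\<lambda>w. insert w \<rho>) ` (\<nu> - \<rho>)"
    using faces_between_eq[OF K \<nu> \<open>\<rho> \<in> K\<close>] by (simp_all add: card_Diff_subset finite_subset)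
  moreover have "inj_on (\<lambda>w. insert w \<rho>) (\<nu> - \<rho>)"
    by (auto intro: inj_onI)
  ultimately show ?thesis
    by (simp add: card_image)
qed (simp only: card.empty even_zero)

lemma bd_chain_bd_chain:
  assumes K: "simplicial_complex K" and "c \<subseteq> K"
  shows "bd_chain K (bd_chain K c) = {}"
  unfolding bd_chain_def
proof (rule zsum_zsum_eq_empty)
  show "finite c" "\<And>\<nu>. finite (bd K \<nu>)"
    using assms simplicial_complex_finite[OF K] by (auto simp: bd_def finite_subset)
  show "even (card {\<tau>\<in>bd K \<nu>. \<rho> \<in> bd K \<tau>})" if "\<nu> \<in> c" for \<nu> \<rho>
    using even_card_faces_between[OF K] that assms(2) by blast
qed

lemma cobd_chain_cobd_chain:
  assumes K: "simplicial_complex K" and "c \<subseteq> K"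
  shows "cobd_chain K (cobd_chain K c) = {}"
  unfolding cobd_chain_def
proof (rule zsum_zsum_eq_empty)
  show "finite c" "\<And>\<nu>. finite (cobd K \<nu>)"
    using assms simplicial_complex_finite[OF K] by (auto simp: cobd_def finite_subset)
  show "even (card {\<tau>\<in>cobd K \<rho>. \<nu> \<in> cobd K \<tau>})" if "\<rho> \<in> c" for \<rho> \<nu>
  proof (cases "\<nu> \<in> K")
    case True
    then have "{\<tau>\<in>cobd K \<rho>. \<nu> \<in> cobd K \<tau>} = {\<tau>\<in>bd K \<nu>. \<rho> \<in> bd K \<tau>}"
      using that assms(2) by (auto simp: bd_def cobd_def)
    then show ?thesis
      using even_card_faces_between[OF K True] by simp
  qed (simp add: cobd_def)
qed

section \<open>Acyclic matchings\<close>

definition reference_map_on ::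
  "'a set \<Rightarrow> 'a set \<Rightarrow> 'a set \<Rightarrow> ('a \<Rightarrow> 'a set) \<Rightarrow> ('a \<Rightarrow> 'b) \<Rightarrow> ('a \<Rightarrow> 'a set) \<Rightarrow> bool" where
  "reference_map_on K W B F deg G \<longleftrightarrow>
     (\<forall>x. x \<notin> K \<longrightarrow> G x = {}) \<and> (\<forall>x\<in>K. G x \<subseteq> {w\<in>W. deg w = deg x}) \<and>
     (\<forall>w\<in>W. G w = {w}) \<and> (\<forall>b\<in>B. G b = {} \<and> zsum G (F b) = {})"

lemma reference_map_onD:
  assumes "reference_map_on K W B F deg G"
  shows "x \<notin> K \<Longrightarrow> G x = {}" "x \<in> K \<Longrightarrow> G x \<subseteq> {w\<in>W. deg w = deg x}"
    "w \<in> W \<Longrightarrow> G w = {w}" "b \<in> B \<Longrightarrow> G b = {}" "b \<in> B \<Longrightarrow> zsum G (F b) = {}"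
  using assms unfolding reference_map_on_def by blast+

definition extension_by :: "'a set \<Rightarrow> ('a \<Rightarrow> 'a set) \<Rightarrow> 'a set \<Rightarrow> 'a set" where
  "extension_by K Q c = zsum (\<lambda>\<kappa>. {\<nu>\<in>K. \<kappa> \<in> Q \<nu>}) c"

lemma zsum_cong_fundef [fundef_cong]:
  "A = B \<Longrightarrow> (\<And>a. a \<in> B \<Longrightarrow> F a = G a) \<Longrightarrow> zsum F A = zsum G B"
  using zsum_cong by blast

text \<open>\<open>F\<close> is a boundary on the basis \<open>K\<close> of a \<open>\<int>\<^sub>2\<close>-chain complex, \<open>F'\<close> its transpose, \<open>W\<close> the
  critical cells, and \<open>mate\<close> matches \<open>A\<close> with \<open>B\<close>. The rank \<open>r\<close> makes the matching acyclic:
  the other faces of \<open>b\<close> precede \<open>mate b\<close>, the other cofaces of \<open>a\<close> follow \<open>mate a\<close>.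
  The grading \<open>deg\<close> only serves to show that reference maps preserve dimension.\<close>
locale Z2_morse_matching =
  fixes K W A B :: "'a set" and F F' :: "'a \<Rightarrow> 'a set" and mate :: "'a \<Rightarrow> 'a"
    and r :: "'a \<Rightarrow> nat" and deg :: "'a \<Rightarrow> 'b"
  assumes finite_K: "finite K"
    and K_eq: "K = W \<union> A \<union> B"
    and disjoint: "W \<inter> A = {}" "W \<inter> B = {}" "A \<inter> B = {}"
    and F_subset: "F x \<subseteq> K" and F'_subset: "F' x \<subseteq> K"
    and mem_F'_iff: "a \<in> K \<Longrightarrow> b \<in> K \<Longrightarrow> b \<in> F' a \<longleftrightarrow> a \<in> F b"
    and F_F: "c \<subseteq> K \<Longrightarrow> zsum F (zsum F c) = {}"
    and F'_F': "c \<subseteq> K \<Longrightarrow> zsum F' (zsum F' c) = {}"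
    and mate_A: "a \<in> A \<Longrightarrow> mate a \<in> B" "a \<in> A \<Longrightarrow> mate (mate a) = a"
    and mate_B: "b \<in> B \<Longrightarrow> mate b \<in> A" "b \<in> B \<Longrightarrow> mate (mate b) = b"
    and mate_in_F: "b \<in> B \<Longrightarrow> mate b \<in> F b"
    and F_before_mate: "b \<in> B \<Longrightarrow> x \<in> F b \<Longrightarrow> x \<noteq> mate b \<Longrightarrow> r x < r (mate b)"
    and F'_after_mate: "a \<in> A \<Longrightarrow> x \<in> F' a \<Longrightarrow> x \<noteq> mate a \<Longrightarrow> r (mate a) < r x"
    and deg_F: "b \<in> B \<Longrightarrow> x \<in> F b \<Longrightarrow> deg x = deg (mate b)"
    and deg_F': "a \<in> A \<Longrightarrow> x \<in> F' a \<Longrightarrow> deg x = deg (mate a)"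
begin

lemma subset_K: "W \<subseteq> K" "A \<subseteq> K" "B \<subseteq> K"
  using K_eq by auto

lemma finite_if_subset_K: "S \<subseteq> K \<Longrightarrow> finite S"
  using finite_K finite_subset by blast

lemma zsum_F_subset_K: "zsum F c \<subseteq> K"
  using zsum_subset_UN[of F c] F_subset by blast

lemma mate_in_F': "a \<in> A \<Longrightarrow> mate a \<in> F' a"
  using mate_in_F[of "mate a"] mate_A[of a] mem_F'_iff[of a "mate a"] K_eq by auto

text \<open>Reversing the rank exchanges boundary and coboundary, and thereby references and
  coreferences.\<close>
lemma dual: "Z2_morse_matching K W B A F' F mate (\<lambda>x. Suc (Max (r ` K)) - r x) deg"
proof
  have r_le: "r x \<le> Max (r ` K)" if "x \<in> K" for x
    using finite_K that by simp
  show "Suc (Max (r ` K)) - r x < Suc (Max (r ` K)) - r (mate a)"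
    if "a \<in> A" "x \<in> F' a" "x \<noteq> mate a" for a x
    using F'_after_mate[OF that] r_le F'_subset that(2) by fastforce
  show "Suc (Max (r ` K)) - r (mate b) < Suc (Max (r ` K)) - r x"
    if "b \<in> B" "x \<in> F b" "x \<noteq> mate b" for b x
    using F_before_mate[OF that] r_le F_subset mate_in_F[OF that(1)] by fastforce
  show "K = W \<union> B \<union> A" "B \<inter> A = {}"
    using K_eq disjoint by auto
  show "b \<in> F a \<longleftrightarrow> a \<in> F' b" if "a \<in> K" "b \<in> K" for a b
    using mem_F'_iff that by blast
qed (fact finite_K disjoint F_subset F'_subset F_F F'_F' mate_A mate_B mate_in_F' deg_F deg_F')+

text \<open>Solving \<open>zsum G (F b) = {}\<close> for \<open>G (mate b)\<close>; the recursion terminates because the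
  other faces of \<open>b\<close> precede \<open>mate b\<close>.\<close>
function reference_fun :: "'a \<Rightarrow> 'a set" where
  "reference_fun x =
     (if x \<in> W then {x} else if x \<in> A then zsum reference_fun (F (mate x) - {x}) else {})"
  by auto
termination
proof (relation "measure r")
  show "(y, x) \<in> measure r" if "x \<notin> W" "x \<in> A" "y \<in> F (mate x) - {x}" for x y
    using F_before_mate[of "mate x" y] mate_A[OF that(2)] that(3) by simp
qed simp

declare reference_fun.simps [simp del]

lemma reference_fun_subset:
  "x \<in> K \<Longrightarrow> reference_fun x \<subseteq> {w\<in>W. deg w = deg x}"
proof (induction x rule: reference_fun.induct)
  case (1 x)
  show ?case
  proof (cases "x \<notin> W \<and> x \<in> A")
    case True
    have "reference_fun y \<subseteq> {w\<in>W. deg w = deg x}" if "y \<in> F (mate x) - {x}" for y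
      using "1.IH"[OF conjunct1[OF True] conjunct2[OF True] that] that F_subset
        deg_F[of "mate x" y] mate_A[of x] True by fastforce
    moreover have "reference_fun x = zsum reference_fun (F (mate x) - {x})"
      using True by (subst reference_fun.simps) simp
    ultimately show ?thesis
      using zsum_subset_UN[of reference_fun "F (mate x) - {x}"] by blast
  qed (subst reference_fun.simps; auto)
qed

lemma reference_map_on_reference_fun: "reference_map_on K W B F deg reference_fun"
  unfolding reference_map_on_def
proof (intro conjI ballI allI impI)
  show "reference_fun x = {}" if "x \<notin> K" for x
    using that K_eq by (subst reference_fun.simps) auto
  show "reference_fun w = {w}" if "w \<in> W" for w
    using that by (simp add: reference_fun.simps)
  show "reference_fun b = {}" if "b \<in> B" for b
    using that disjoint by (subst reference_fun.simps) auto
  show "zsum reference_fun (F b) = {}" if b: "b \<in> B" for b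
  proof -
    have "reference_fun (mate b) = zsum reference_fun (F b - {mate b})"
      using mate_B[OF b] disjoint by (subst reference_fun.simps) auto
    then show ?thesis
      using zsum_remove[OF finite_subset[OF F_subset finite_K] mate_in_F[OF b], of reference_fun]
      by simp
  qed
qed (fact reference_fun_subset)

lemma reference_map_on_iff: "reference_map_on K W B F deg G \<longleftrightarrow> G = reference_fun"
proof
  assume G: "reference_map_on K W B F deg G"
  have "G x = reference_fun x" for x
  proof (induction x rule: reference_fun.induct)
    case (1 x)
    consider "x \<in> W" | "x \<in> A" | "x \<in> B" | "x \<notin> K"
      using K_eq by blast
    then show ?case
    proof cases
      case 2
      then have "x \<notin> W" "mate x \<in> B" "mate (mate x) = x"
        using disjoint mate_A by auto
      then have "G x = zsum G (F (mate x) - {x})"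
        using G zsum_eq_emptyD[OF finite_subset[OF F_subset finite_K] mate_in_F]
        unfolding reference_map_on_def by metis
      also have "\<dots> = zsum reference_fun (F (mate x) - {x})"
        by (rule zsum_cong) (use "1.IH" \<open>x \<notin> W\<close> 2 in blast)
      finally show ?thesis
        using \<open>x \<notin> W\<close> 2 by (subst reference_fun.simps) simp
    qed (use G reference_map_on_reference_fun in \<open>auto simp: reference_map_on_def\<close>)
  qed
  then show "G = reference_fun" ..
qed (simp add: reference_map_on_reference_fun)

lemma ex1_reference_map: "\<exists>!G. reference_map_on K W B F deg G"
  by (simp add: reference_map_on_iff)

text \<open>The mate of the \<open>r\<close>-maximal cell of \<open>d\<close> is a face of no other cell of \<open>d\<close>.\<close>
lemma B_chain_eq_empty:
  assumes d: "d \<subseteq> B" and "zsum F d \<inter> A = {}"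
  shows "d = {}"
proof (rule ccontr)
  assume "d \<noteq> {}"
  moreover have "finite d"
    using d subset_K by (blast intro: finite_if_subset_K)
  ultimately have "Max (r ` d) \<in> r ` d"
    by simp
  then obtain b where b: "b \<in> d" and "r b = Max (r ` d)"
    by (auto simp del: Max_in)
  with \<open>finite d\<close> have b_max: "r b' \<le> r b" if "b' \<in> d" for b'
    using that by simp
  have "b' = b" if "b' \<in> d" "mate b \<in> F b'" for b'
  proof (rule ccontr)
    assume "b' \<noteq> b"
    have "b' \<in> F' (mate b)"
      using that d b mate_B[of b] mem_F'_iff[of "mate b" b'] K_eq by auto
    then have "r b < r b'"
      using F'_after_mate[of "mate b" b'] mate_B[of b] b d \<open>b' \<noteq> b\<close> by auto
    then show False
      using b_max[OF that(1)] by simp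
  qed
  then have "{b'\<in>d. mate b \<in> F b'} = {b}"
    using b d mate_in_F by auto
  then have "mate b \<in> zsum F d \<inter> A"
    using b d mate_B by (simp add: mem_zsum_iff subset_iff)
  then show False
    using assms(2) by blast
qed

context
  fixes Q :: "'a \<Rightarrow> 'a set"
  assumes Q: "reference_map_on K W A F' deg Q"
begin

lemma extension_subset: "extension_by K Q c \<subseteq> K"
  using zsum_subset_UN[of "\<lambda>\<kappa>. {\<nu>\<in>K. \<kappa> \<in> Q \<nu>}" c] by (auto simp: extension_by_def)

lemma extension_Int_W:
  assumes "c \<subseteq> W"
  shows "extension_by K Q c \<inter> W = c"
proof -
  have "{\<kappa>\<in>c. w \<in> {\<nu>\<in>K. \<kappa> \<in> Q \<nu>}} = (if w \<in> c then {w} else {})" if "w \<in> W" for w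
    using reference_map_onD(3)[OF Q that] subset_K that by auto
  then show ?thesis
    using assms by (auto simp: extension_by_def mem_zsum_iff split: if_splits)
qed

lemma extension_Int_A: "extension_by K Q c \<inter> A = {}"
  using reference_map_onD(4)[OF Q] zsum_subset_UN[of "\<lambda>\<kappa>. {\<nu>\<in>K. \<kappa> \<in> Q \<nu>}" c]
  by (auto simp: extension_by_def)

lemma F_extension_Int_A:
  assumes "finite c"
  shows "zsum F (extension_by K Q c) \<inter> A = {}"
proof -
  have "a \<notin> zsum F {\<nu>\<in>K. \<kappa> \<in> Q \<nu>}" if a: "a \<in> A" for a \<kappa>
  proof -
    have "{\<nu>\<in>{\<nu>\<in>K. \<kappa> \<in> Q \<nu>}. a \<in> F \<nu>} = {\<nu>\<in>F' a. \<kappa> \<in> Q \<nu>}"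
      using a mem_F'_iff[of a] F'_subset[of a] subset_K by blast
    moreover have "\<kappa> \<notin> zsum Q (F' a)"
      using reference_map_onD(5)[OF Q a] by simp
    ultimately show ?thesis
      by (simp add: mem_zsum_iff)
  qed
  moreover have "zsum F (extension_by K Q c) = zsum (\<lambda>\<kappa>. zsum F {\<nu>\<in>K. \<kappa> \<in> Q \<nu>}) c"
    unfolding extension_by_def using assms finite_K by (simp add: zsum_zsum)
  ultimately show ?thesis
    using zsum_subset_UN[of "\<lambda>\<kappa>. zsum F {\<nu>\<in>K. \<kappa> \<in> Q \<nu>}" c] by blast
qed

lemma eq_extension_Int_W:
  assumes y: "y \<subseteq> K" "y \<inter> A = {}" "zsum F y \<inter> A = {}"
  shows "y = extension_by K Q (y \<inter> W)"
proof -
  let ?x = "extension_by K Q (y \<inter> W)"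
  have fin: "finite y" "finite ?x"
    using y(1) extension_subset by (auto intro: finite_if_subset_K)
  have x: "?x \<inter> W = y \<inter> W" "?x \<inter> A = {}" "zsum F ?x \<inter> A = {}"
    using extension_Int_W[of "y \<inter> W"] extension_Int_A F_extension_Int_A[of "y \<inter> W"] fin(1)
    by simp_all
  have "sym_diff y ?x \<subseteq> B"
    using y(1,2) x(1,2) extension_subset[of "y \<inter> W"] unfolding K_eq by blast
  moreover have "zsum F (sym_diff y ?x) \<inter> A = {}"
    using y(3) x(3) by (auto simp: zsum_sym_diff[OF fin])
  ultimately show ?thesis
    using B_chain_eq_empty by blast
qed

end

context
  fixes G :: "'a \<Rightarrow> 'a set"
  assumes G: "reference_map_on K W B F deg G"
begin

lemma zsum_reference_map:
  assumes "d \<subseteq> W \<union> B"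
  shows "zsum G d = d \<inter> W"
proof -
  have fin: "finite (d \<inter> W)" "finite (d \<inter> B)"
    using subset_K by (auto intro: finite_if_subset_K)
  have "d = (d \<inter> W) \<union> (d \<inter> B)"
    using assms by blast
  moreover have "zsum G (d \<inter> W) = d \<inter> W"
    by (rule zsum_singletons) (use reference_map_onD(3)[OF G] in blast)
  moreover have "zsum G (d \<inter> B) = {}"
    by (rule zsum_eq_empty) (use reference_map_onD(4)[OF G] in blast)
  moreover have "(d \<inter> W) \<inter> (d \<inter> B) = {}"
    using disjoint(2) by blast
  ultimately show ?thesis
    using zsum_Un_disjoint[OF fin, of G] by simp
qed

lemma zsum_reference_map_F:
  assumes "e \<subseteq> B"
  shows "zsum G (zsum F e) = {}"
proof -
  have "zsum G (zsum F e) = zsum (\<lambda>b. zsum G (F b)) e"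
    using assms subset_K F_subset by (intro zsum_zsum finite_if_subset_K) blast+
  also have "\<dots> = {}"
    by (rule zsum_eq_empty) (use reference_map_onD(5)[OF G] assms in blast)
  finally show ?thesis .
qed

end

theorem F_extension:
  assumes G: "reference_map_on K W B F deg G" and Q: "reference_map_on K W A F' deg Q"
    and c: "c \<subseteq> W"
  shows "zsum F (extension_by K Q c) = extension_by K Q (zsum G (zsum F c))"
proof -
  let ?x = "extension_by K Q c"
  define y where "y = zsum F ?x"
  have fin: "finite c" "finite (?x \<inter> B)" "finite (zsum F c)" "finite (zsum F (?x \<inter> B))"
    using c subset_K extension_subset[OF Q] zsum_F_subset_K by (blast intro: finite_if_subset_K)+
  have "?x = c \<union> (?x \<inter> B)" "c \<inter> (?x \<inter> B) = {}"
    using extension_Int_W[OF Q c] extension_Int_A[OF Q] extension_subset[OF Q] c disjoint(2)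
    unfolding K_eq by blast+
  then have "y = sym_diff (zsum F c) (zsum F (?x \<inter> B))"
    unfolding y_def using zsum_Un_disjoint[OF fin(1,2)] by metis
  then have "zsum G y = zsum G (zsum F c)"
    by (simp add: zsum_sym_diff[OF fin(3,4)] zsum_reference_map_F[OF G])
  moreover have y: "y \<subseteq> K" "y \<inter> A = {}" "zsum F y = {}"
    using zsum_F_subset_K F_extension_Int_A[OF Q fin(1)] F_F[OF extension_subset[OF Q]]
    unfolding y_def by simp_all
  moreover from this have "zsum G y = y \<inter> W"
    using zsum_reference_map[OF G] unfolding K_eq by blast
  ultimately have "y = extension_by K Q (zsum G (zsum F c))"
    using eq_extension_Int_W[OF Q, of y] by simp
  then show ?thesis
    unfolding y_def .
qed

theorem F'_extension:
  assumes "reference_map_on K W A F' deg Q" "reference_map_on K W B F deg G" "c \<subseteq> W"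
  shows "zsum F' (extension_by K G c) = extension_by K G (zsum Q (zsum F' c))"
  using Z2_morse_matching.F_extension[OF dual assms] .

lemma ex1_coreference_map: "\<exists>!Q. reference_map_on K W A F' deg Q"
  using Z2_morse_matching.ex1_reference_map[OF dual] .

end

section \<open>Morse sequences\<close>

lemma free_pair_card:
  assumes L: "simplicial_complex L" and fp: "free_pair L \<sigma> \<tau>"
  shows "card \<tau> = card \<sigma> + 1"
proof -
  have "\<sigma> \<subset> \<tau>" "\<tau> \<in> L" and only_coface: "\<And>\<rho>. \<rho> \<in> L \<Longrightarrow> \<sigma> \<subseteq> \<rho> \<Longrightarrow> \<rho> \<noteq> \<sigma> \<Longrightarrow> \<rho> = \<tau>"
    using fp unfolding free_pair_def by blast+
  then obtain v where v: "v \<in> \<tau>" "v \<notin> \<sigma>"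
    by blast
  have "insert v \<sigma> \<in> L"
    by (rule simplicial_complexD(3)[OF L \<open>\<tau> \<in> L\<close>]) (use v \<open>\<sigma> \<subset> \<tau>\<close> in auto)
  then have "insert v \<sigma> = \<tau>"
    using only_coface v by blast
  moreover have "finite \<sigma>"
    using finite_subset[OF psubset_imp_subset[OF \<open>\<sigma> \<subset> \<tau>\<close>] simplicial_complexD(1)[OF L \<open>\<tau> \<in> L\<close>]] .
  ultimately show ?thesis
    using v(2) by auto
qed

definition added :: "'v set set list \<Rightarrow> nat \<Rightarrow> 'v set set" where
  "added Ks i = Ks ! Suc i - Ks ! i"

definition birth :: "'v set set list \<Rightarrow> 'v set \<Rightarrow> nat" where
  "birth Ks x = (LEAST i. x \<in> Ks ! Suc i)"

text \<open>The simplex added together with \<open>x\<close>; a junk value if \<open>x\<close> is critical.\<close>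
definition partner :: "'v set set list \<Rightarrow> 'v set \<Rightarrow> 'v set" where
  "partner Ks x = the_elem (added Ks (birth Ks x) - {x})"

lemma critical_eq: "critical Ks = {\<nu>. \<exists>i. Suc i < length Ks \<and> added Ks i = {\<nu>}}"
  by (simp add: critical_def added_def)

lemma lower_regular_eq:
  "lower_regular Ks = {\<sigma>. \<exists>i \<tau>. Suc i < length Ks \<and> \<sigma> \<subset> \<tau> \<and> added Ks i = {\<sigma>, \<tau>}}"
  by (simp add: lower_regular_def added_def)

lemma upper_regular_eq:
  "upper_regular Ks = {\<tau>. \<exists>i \<sigma>. Suc i < length Ks \<and> \<sigma> \<subset> \<tau> \<and> added Ks i = {\<sigma>, \<tau>}}"
  by (simp add: upper_regular_def added_def)

context
  fixes K :: "'v set set" and Ks :: "'v set set list"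
  assumes complex: "simplicial_complex K" and morse: "morse_sequence Ks K"
begin

lemma morse_step_cases:
  assumes "Suc i < length Ks"
  obtains (expansion) \<sigma> \<tau> where "free_pair (Ks ! Suc i) \<sigma> \<tau>" "Ks ! i = Ks ! Suc i - {\<sigma>, \<tau>}"
  | (filling) \<nu> where "\<nu> \<in> Ks ! Suc i" "Ks ! i = Ks ! Suc i - {\<nu>}"
proof -
  have "elementary_expansion (Ks ! Suc i) (Ks ! i) \<or> elementary_filling (Ks ! Suc i) (Ks ! i)"
    using morse assms by (simp add: morse_sequence_def)
  then show ?thesis
  proof
    assume "elementary_expansion (Ks ! Suc i) (Ks ! i)"
    then show ?thesis
      using that(1) unfolding elementary_expansion_def by blast
  next
    assume "elementary_filling (Ks ! Suc i) (Ks ! i)"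
    then obtain \<nu> where "facet (Ks ! Suc i) \<nu>" "Ks ! i = Ks ! Suc i - {\<nu>}"
      unfolding elementary_filling_def by blast
    then show ?thesis
      using that(2) unfolding facet_def by blast
  qed
qed

lemma Ks_mono:
  assumes "i \<le> j" "j < length Ks"
  shows "Ks ! i \<subseteq> Ks ! j"
  using assms
proof (induction j)
  case (Suc j)
  have "Ks ! j \<subseteq> Ks ! Suc j"
    using Suc.prems(2) by (cases rule: morse_step_cases) auto
  with Suc show ?case
    by (cases "i = Suc j") auto
qed simp

lemma Ks_subset_K:
  assumes "i < length Ks"
  shows "Ks ! i \<subseteq> K"
proof -
  have "Ks ! (length Ks - 1) = K"
    using morse unfolding morse_sequence_def by (auto simp: last_conv_nth)
  then show ?thesis
    using Ks_mono[of i "length Ks - 1"] assms by simp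
qed

lemma birthD:
  assumes "x \<in> K"
  shows "Suc (birth Ks x) < length Ks" "x \<in> Ks ! Suc (birth Ks x)" "x \<notin> Ks ! birth Ks x"
proof -
  have "Ks \<noteq> []" "Ks ! 0 = {}" "x \<in> Ks ! (length Ks - 1)"
    using morse assms by (auto simp: morse_sequence_def last_conv_nth)
  then obtain m where m: "length Ks = Suc (Suc m)" "x \<in> Ks ! Suc m"
    by (cases "length Ks"; cases "length Ks - 1") auto
  show x: "x \<in> Ks ! Suc (birth Ks x)"
    unfolding birth_def by (rule LeastI[of _ m]) (rule m(2))
  show "Suc (birth Ks x) < length Ks"
    using Least_le[of "\<lambda>i. x \<in> Ks ! Suc i" m] m by (simp add: birth_def)
  show "x \<notin> Ks ! birth Ks x"
  proof (cases "birth Ks x")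
    case (Suc k)
    then show ?thesis
      using not_less_Least[of k "\<lambda>i. x \<in> Ks ! Suc i"] by (simp add: birth_def)
  qed (use \<open>Ks ! 0 = {}\<close> in simp)
qed

lemma mem_Ks_iff:
  assumes "x \<in> K" "j < length Ks"
  shows "x \<in> Ks ! j \<longleftrightarrow> birth Ks x < j"
proof
  show "birth Ks x < j" if "x \<in> Ks ! j"
    using that birthD[OF assms(1)] Ks_mono[of j "birth Ks x"] by (meson Suc_lessD not_less subsetD)
  show "x \<in> Ks ! j" if "birth Ks x < j"
    using that birthD[OF assms(1)] Ks_mono[of "Suc (birth Ks x)" j] assms(2) by auto
qed

lemma mem_added_iff:
  assumes "Suc i < length Ks"
  shows "x \<in> added Ks i \<longleftrightarrow> x \<in> K \<and> birth Ks x = i"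
  using assms Ks_subset_K[of "Suc i"] mem_Ks_iff[of x i] mem_Ks_iff[of x "Suc i"]
  unfolding added_def by auto

lemma added_cases:
  assumes "Suc i < length Ks"
  obtains (expansion) \<sigma> \<tau> where "free_pair (Ks ! Suc i) \<sigma> \<tau>" "added Ks i = {\<sigma>, \<tau>}"
  | (filling) \<nu> where "added Ks i = {\<nu>}"
  using assms
proof (cases rule: morse_step_cases)
  case (expansion \<sigma> \<tau>)
  then have "added Ks i = {\<sigma>, \<tau>}"
    by (auto simp: added_def free_pair_def)
  with expansion that(1) show ?thesis
    by blast
qed (auto simp: added_def intro: that(2))

lemma added_pair:
  assumes i: "Suc i < length Ks" and "\<sigma> \<subset> \<tau>" and added: "added Ks i = {\<sigma>, \<tau>}"
  shows "free_pair (Ks ! Suc i) \<sigma> \<tau>" "birth Ks \<sigma> = i" "birth Ks \<tau> = i"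
    "partner Ks \<sigma> = \<tau>" "partner Ks \<tau> = \<sigma>" "card \<tau> = card \<sigma> + 1"
    "\<sigma> \<in> lower_regular Ks" "\<tau> \<in> upper_regular Ks"
proof -
  show fp: "free_pair (Ks ! Suc i) \<sigma> \<tau>"
    using i
  proof (cases rule: added_cases)
    case (expansion \<sigma>' \<tau>')
    then have "\<sigma>' \<subset> \<tau>'" "{\<sigma>', \<tau>'} = {\<sigma>, \<tau>}"
      using added by (auto simp: free_pair_def)
    then have "\<sigma>' = \<sigma> \<and> \<tau>' = \<tau>"
      using \<open>\<sigma> \<subset> \<tau>\<close> by (metis doubleton_eq_iff less_asym')
    then show ?thesis
      using expansion(1) by simp
  qed (use added \<open>\<sigma> \<subset> \<tau>\<close> in \<open>auto simp: doubleton_eq_iff\<close>)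
  show "birth Ks \<sigma> = i" "birth Ks \<tau> = i"
    using mem_added_iff[OF i] added by auto
  then show "partner Ks \<sigma> = \<tau>" "partner Ks \<tau> = \<sigma>"
    using added \<open>\<sigma> \<subset> \<tau>\<close> by (auto simp: partner_def insert_Diff_if)
  show "card \<tau> = card \<sigma> + 1"
    using free_pair_card[OF _ fp] morse i by (simp add: morse_sequence_def)
  show "\<sigma> \<in> lower_regular Ks" "\<tau> \<in> upper_regular Ks"
    using i \<open>\<sigma> \<subset> \<tau>\<close> added unfolding lower_regular_eq upper_regular_eq by blast+
qed

lemma critical_iff: "\<nu> \<in> critical Ks \<longleftrightarrow> \<nu> \<in> K \<and> added Ks (birth Ks \<nu>) = {\<nu>}"
proof
  assume "\<nu> \<in> critical Ks"
  then obtain i where "Suc i < length Ks" "added Ks i = {\<nu>}"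
    unfolding critical_eq by blast
  moreover from this have "\<nu> \<in> K" "birth Ks \<nu> = i"
    using mem_added_iff by auto
  ultimately show "\<nu> \<in> K \<and> added Ks (birth Ks \<nu>) = {\<nu>}"
    by simp
next
  assume "\<nu> \<in> K \<and> added Ks (birth Ks \<nu>) = {\<nu>}"
  then show "\<nu> \<in> critical Ks"
    using birthD(1)[of \<nu>] unfolding critical_eq by blast
qed

lemma lower_regular_partner:
  assumes "\<sigma> \<in> lower_regular Ks"
  defines "\<tau> \<equiv> partner Ks \<sigma>"
  shows "\<sigma> \<subset> \<tau>" "added Ks (birth Ks \<sigma>) = {\<sigma>, \<tau>}" "free_pair (Ks ! Suc (birth Ks \<sigma>)) \<sigma> \<tau>"
    "birth Ks \<tau> = birth Ks \<sigma>" "partner Ks \<tau> = \<sigma>" "\<tau> \<in> upper_regular Ks" "card \<tau> = card \<sigma> + 1"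
proof -
  obtain i \<tau>' where i: "Suc i < length Ks" "\<sigma> \<subset> \<tau>'" "added Ks i = {\<sigma>, \<tau>'}"
    using assms(1) unfolding lower_regular_eq by blast
  from added_pair[OF i] show "\<sigma> \<subset> \<tau>" "added Ks (birth Ks \<sigma>) = {\<sigma>, \<tau>}" "free_pair (Ks ! Suc (birth Ks \<sigma>)) \<sigma> \<tau>"
    "birth Ks \<tau> = birth Ks \<sigma>" "partner Ks \<tau> = \<sigma>" "\<tau> \<in> upper_regular Ks" "card \<tau> = card \<sigma> + 1"
    using i unfolding \<tau>_def by simp_all
qed

lemma upper_regular_partner:
  assumes "\<tau> \<in> upper_regular Ks"
  shows "partner Ks \<tau> \<in> lower_regular Ks" "partner Ks (partner Ks \<tau>) = \<tau>"
proof -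
  obtain i \<sigma> where i: "Suc i < length Ks" "\<sigma> \<subset> \<tau>" "added Ks i = {\<sigma>, \<tau>}"
    using assms unfolding upper_regular_eq by blast
  with added_pair[OF i] show "partner Ks \<tau> \<in> lower_regular Ks" "partner Ks (partner Ks \<tau>) = \<tau>"
    by simp_all
qed

lemma regular_subset_K: "lower_regular Ks \<subseteq> K" "upper_regular Ks \<subseteq> K"
  using mem_added_iff unfolding lower_regular_eq upper_regular_eq by blast+

lemma K_eq_critical_regular: "K = critical Ks \<union> lower_regular Ks \<union> upper_regular Ks"
proof (intro equalityI subsetI)
  fix x
  assume x: "x \<in> K"
  then have i: "Suc (birth Ks x) < length Ks" and x_added: "x \<in> added Ks (birth Ks x)"
    using birthD mem_added_iff by blast+
  from i show "x \<in> critical Ks \<union> lower_regular Ks \<union> upper_regular Ks"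
  proof (cases rule: added_cases)
    case (expansion \<sigma> \<tau>)
    then have "\<sigma> \<subset> \<tau>"
      by (simp add: free_pair_def)
    then have "\<sigma> \<in> lower_regular Ks" "\<tau> \<in> upper_regular Ks"
      using added_pair[OF i _ expansion(2)] by simp_all
    then show ?thesis
      using x_added expansion(2) by auto
  next
    case (filling \<nu>)
    then show ?thesis
      using x x_added critical_iff by auto
  qed
qed (use critical_iff regular_subset_K in blast)

lemma critical_regular_disjoint:
  "critical Ks \<inter> lower_regular Ks = {}" "critical Ks \<inter> upper_regular Ks = {}"
  "lower_regular Ks \<inter> upper_regular Ks = {}"
proof -
  have "partner Ks x \<notin> {x}" if "x \<in> lower_regular Ks" for x
    using lower_regular_partner(1)[OF that] by auto
  then show "critical Ks \<inter> lower_regular Ks = {}"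
    using critical_iff lower_regular_partner(2) by fastforce
  have "x \<notin> critical Ks" if "x \<in> upper_regular Ks" for x
  proof -
    let ?\<sigma> = "partner Ks x"
    have "?\<sigma> \<in> lower_regular Ks" "partner Ks ?\<sigma> = x"
      using upper_regular_partner[OF that] by simp_all
    then have "added Ks (birth Ks x) = {?\<sigma>, x}" "?\<sigma> \<noteq> x"
      using lower_regular_partner(1,2,4)[of ?\<sigma>] by auto
    then show ?thesis
      using critical_iff by auto
  qed
  then show "critical Ks \<inter> upper_regular Ks = {}"
    by blast
  have "x \<notin> lower_regular Ks" if "x \<in> upper_regular Ks" for x
    using upper_regular_partner[OF that] lower_regular_partner(1)[of x]
      lower_regular_partner(1)[of "partner Ks x"] by auto
  then show "lower_regular Ks \<inter> upper_regular Ks = {}"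
    by blast
qed

lemma Ks_simplicial_complex: "i < length Ks \<Longrightarrow> simplicial_complex (Ks ! i)"
  using morse by (simp add: morse_sequence_def)

lemma partner_mem_bd:
  assumes "\<tau> \<in> upper_regular Ks"
  shows "partner Ks \<tau> \<in> bd K \<tau>"
proof -
  let ?\<sigma> = "partner Ks \<tau>"
  have "?\<sigma> \<in> lower_regular Ks" "partner Ks ?\<sigma> = \<tau>"
    using upper_regular_partner[OF assms] by simp_all
  then show ?thesis
    using lower_regular_partner(1,7)[of ?\<sigma>] regular_subset_K by (auto simp: bd_def)
qed

text \<open>Removing the pair \<open>(\<sigma>, \<tau>)\<close> leaves a complex, which contains the other faces of \<open>\<tau>\<close>.\<close>
lemma birth_less_partner_if_mem_bd:
  assumes \<tau>: "\<tau> \<in> upper_regular Ks" and x: "x \<in> bd K \<tau>" "x \<noteq> partner Ks \<tau>"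
  shows "birth Ks x < birth Ks (partner Ks \<tau>)"
proof -
  let ?\<sigma> = "partner Ks \<tau>"
  let ?i = "birth Ks ?\<sigma>"
  have \<sigma>: "?\<sigma> \<in> lower_regular Ks" "partner Ks ?\<sigma> = \<tau>"
    using upper_regular_partner[OF \<tau>] by simp_all
  have i: "Suc ?i < length Ks"
    using birthD(1) \<sigma>(1) regular_subset_K by blast
  have "\<tau> \<in> Ks ! Suc ?i" "added Ks ?i = {?\<sigma>, \<tau>}"
    using lower_regular_partner(2)[OF \<sigma>(1)] \<sigma>(2) by (auto simp: added_def)
  moreover have "x \<in> K" "x \<subset> \<tau>"
    using x(1) by (auto simp: bd_def)
  moreover have "x \<noteq> {}"
    using simplicial_complexD(2)[OF complex \<open>x \<in> K\<close>] .
  ultimately have "x \<in> Ks ! Suc ?i" "x \<notin> added Ks ?i"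
    using simplicial_complexD(3)[OF Ks_simplicial_complex[OF i]] x(2) by auto
  then have "x \<in> Ks ! ?i"
    by (simp add: added_def)
  then show ?thesis
    using mem_Ks_iff \<open>x \<in> K\<close> i by simp
qed

text \<open>\<open>(\<sigma>, \<tau>)\<close> is a free pair when it is added, so the other cofaces of \<open>\<sigma>\<close> come later.\<close>
lemma birth_partner_less_if_mem_cobd:
  assumes \<sigma>: "\<sigma> \<in> lower_regular Ks" and x: "x \<in> cobd K \<sigma>" "x \<noteq> partner Ks \<sigma>"
  shows "birth Ks (partner Ks \<sigma>) < birth Ks x"
proof -
  let ?i = "birth Ks \<sigma>"
  have "x \<in> K" "\<sigma> \<subset> x"
    using x(1) by (auto simp: cobd_def)
  then have "x \<notin> Ks ! Suc ?i"
    using lower_regular_partner(3)[OF \<sigma>] x(2) by (auto simp: free_pair_def)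
  moreover have "Suc ?i < length Ks"
    using birthD(1) \<sigma> regular_subset_K by blast
  ultimately show ?thesis
    using mem_Ks_iff[OF \<open>x \<in> K\<close>] lower_regular_partner(4)[OF \<sigma>] by simp
qed

lemma morse_matching:
  "Z2_morse_matching K (critical Ks) (lower_regular Ks) (upper_regular Ks) (bd K) (cobd K)
     (partner Ks) (birth Ks) card"
proof
  show "finite K"
    by (rule simplicial_complex_finite[OF complex])
  show "K = critical Ks \<union> lower_regular Ks \<union> upper_regular Ks"
    by (rule K_eq_critical_regular)
  show "critical Ks \<inter> lower_regular Ks = {}" "critical Ks \<inter> upper_regular Ks = {}"
    "lower_regular Ks \<inter> upper_regular Ks = {}"
    by (rule critical_regular_disjoint)+
  show "bd K x \<subseteq> K" "cobd K x \<subseteq> K" for x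
    by (auto simp: bd_def cobd_def)
  show "b \<in> cobd K a \<longleftrightarrow> a \<in> bd K b" if "a \<in> K" "b \<in> K" for a b
    using that by (auto simp: bd_def cobd_def)
  show "zsum (bd K) (zsum (bd K) c) = {}" "zsum (cobd K) (zsum (cobd K) c) = {}" if "c \<subseteq> K" for c
    using bd_chain_bd_chain[OF complex that] cobd_chain_cobd_chain[OF complex that]
    by (simp_all add: bd_chain_def cobd_chain_def)
  show "partner Ks \<sigma> \<in> upper_regular Ks" "partner Ks (partner Ks \<sigma>) = \<sigma>"
    if "\<sigma> \<in> lower_regular Ks" for \<sigma>
    using lower_regular_partner(5,6)[OF that] by simp_all
  show "partner Ks \<tau> \<in> lower_regular Ks" "partner Ks (partner Ks \<tau>) = \<tau>"
    if "\<tau> \<in> upper_regular Ks" for \<tau>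
    by (rule upper_regular_partner[OF that])+
  show "partner Ks \<tau> \<in> bd K \<tau>" if "\<tau> \<in> upper_regular Ks" for \<tau>
    by (rule partner_mem_bd[OF that])
  show "birth Ks x < birth Ks (partner Ks \<tau>)"
    if "\<tau> \<in> upper_regular Ks" "x \<in> bd K \<tau>" "x \<noteq> partner Ks \<tau>" for \<tau> x
    by (rule birth_less_partner_if_mem_bd[OF that])
  show "birth Ks (partner Ks \<sigma>) < birth Ks x"
    if "\<sigma> \<in> lower_regular Ks" "x \<in> cobd K \<sigma>" "x \<noteq> partner Ks \<sigma>" for \<sigma> x
    by (rule birth_partner_less_if_mem_cobd[OF that])
  show "card x = card (partner Ks \<tau>)" if "\<tau> \<in> upper_regular Ks" "x \<in> bd K \<tau>" for \<tau> x
    using partner_mem_bd[OF that(1)] that(2) by (simp add: bd_def)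
  show "card x = card (partner Ks \<sigma>)" if "\<sigma> \<in> lower_regular Ks" "x \<in> cobd K \<sigma>" for \<sigma> x
    using lower_regular_partner(7)[OF that(1)] that(2) by (simp add: cobd_def)
qed

lemma critical_Int_simplices_of_dim:
  assumes "\<sigma> \<in> K"
  shows "critical Ks \<inter> simplices_of_dim K (card \<sigma> - 1) = {w\<in>critical Ks. card w = card \<sigma>}"
proof -
  have "card \<sigma> > 0"
    using simplicial_complexD(1,2)[OF complex assms] by (simp add: card_gt_0_iff)
  then show ?thesis
    using K_eq_critical_regular by (auto simp: simplices_of_dim_def)
qed

lemma critical_dim_iff:
  "(\<forall>\<sigma>\<in>K. f \<sigma> \<subseteq> critical Ks \<inter> simplices_of_dim K (card \<sigma> - 1)) \<longleftrightarrow>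
     (\<forall>\<sigma>\<in>K. f \<sigma> \<subseteq> {w\<in>critical Ks. card w = card \<sigma>})"
  by (intro ball_cong refl) (simp only: critical_Int_simplices_of_dim)

lemma is_reference_iff:
  "is_reference K Ks f \<longleftrightarrow> reference_map_on K (critical Ks) (upper_regular Ks) (bd K) card f"
  unfolding is_reference_def reference_map_on_def critical_dim_iff ..

lemma is_coreference_iff:
  "is_coreference K Ks f \<longleftrightarrow> reference_map_on K (critical Ks) (lower_regular Ks) (cobd K) card f"
  unfolding is_coreference_def reference_map_on_def critical_dim_iff ..

lemma reference_map_on_reference:
  "reference_map_on K (critical Ks) (upper_regular Ks) (bd K) card (reference K Ks)"
  unfolding reference_def is_reference_iff
  by (rule theI' [OF Z2_morse_matching.ex1_reference_map[OF morse_matching]])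

lemma reference_map_on_coreference:
  "reference_map_on K (critical Ks) (lower_regular Ks) (cobd K) card (coreference K Ks)"
  unfolding coreference_def is_coreference_iff
  by (rule theI' [OF Z2_morse_matching.ex1_coreference_map[OF morse_matching]])

end

theorem theorem9:
  fixes K :: "'v set set" and Ks :: "'v set set list"
  assumes "simplicial_complex K" and "morse_sequence Ks K"
  shows "\<forall>p. \<forall>c \<in> critical_chains K Ks p.
           bd_chain K (extension K Ks c) = extension K Ks (hat_bd K Ks c) \<and>
           cobd_chain K (coextension K Ks c) = coextension K Ks (hat_cobd K Ks c)"
proof -
  interpret Z2_morse_matching K "critical Ks" "lower_regular Ks" "upper_regular Ks" "bd K" "cobd K"
      "partner Ks" "birth Ks" card
    using morse_matching[OF assms] .
  note ref = reference_map_on_reference[OF assms] and coref = reference_map_on_coreference[OF assms]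
  have "extension K Ks = extension_by K (coreference K Ks)"
    "coextension K Ks = extension_by K (reference K Ks)"
    by (simp_all add: fun_eq_iff extension_def coextension_def extension_by_def)
  then show ?thesis
    using F_extension[OF ref coref] F'_extension[OF coref ref]
    by (simp add: critical_chains_def bd_chain_def cobd_chain_def hat_bd_def hat_cobd_def)
qed

end
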